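(* For every positive integer $n$, \[ Z(n)\equiv(-1)^{\delta_{n}}\pmod{n}, \] where $\delta_n=1$ if $n$ is non-composite ($n=1$ or $n$ prime) and $\delta_n=0$ otherwise, and $Z(n)=\sum_{k=0}^{n-1}\frac{1+(-1)^{k}k!(n-k-1)!}{n}$. *)

theory Defs
  imports "HOL-Number_Theory.Number_Theory"
begin

definition delta :: "nat \<Rightarrow> nat" where
  "delta n = (if n = 1 \<or> prime n then 1 else 0)"

definition Z :: "nat \<Rightarrow> rat" where
  "Z n = (\<Sum>k<n. (1 + (-1) ^ k * fact k * fact (n - k - 1)) / of_nat n)"

end

theory Submission
  imports Defs
begin

text \<open>
  Write \<open>S(n) = \<Sum>k<n. (-1)^k k! (n-1-k)!\<close>, so that \<open>Z(n) = 1 + S(n)/n\<close>.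
  Since \<open>(n+1) k! (n-1-k)! = k! (n-k)! + (k+1)! (n-k-1)!\<close>, the sum \<open>(n+1) S(n)\<close>
  telescopes to \<open>n! (1 - (-1)^n)\<close>. For even \<open>n\<close> this gives \<open>Z(n) = 1\<close>; for odd \<open>n\<close>
  it gives \<open>S(n) = n r\<close> with \<open>(n+1) r = 2 (n-1)!\<close>, hence \<open>Z(n) = 1 + r\<close> and
  \<open>r \<equiv> 2 (n-1)! (mod n)\<close>. Wilson's theorem and the divisibility \<open>n | (n-1)!\<close>
  for composite \<open>n \<noteq> 4\<close> (an odd \<open>n\<close> is never 4) then determine \<open>Z(n)\<close> mod \<open>n\<close>.
\<close>

definition alt_fact_sum :: "nat \<Rightarrow> int" where
  "alt_fact_sum n = (\<Sum>k<n. (-1) ^ k * fact k * fact (n - k - 1))"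

lemma Z_eq_of_int:
  assumes "n \<ge> 1" and "alt_fact_sum n = int n * q"
  shows "Z n = of_int (1 + q)"
proof -
  have "Z n = (\<Sum>k<n. 1 + (-1) ^ k * fact k * fact (n - k - 1)) / of_nat n"
    unfolding Z_def by (simp add: sum_divide_distrib)
  also have "(\<Sum>k<n. 1 + (-1) ^ k * fact k * fact (n - k - 1))
              = (of_nat n + of_int (alt_fact_sum n) :: rat)"
    by (simp add: sum.distrib alt_fact_sum_def)
  also have "\<dots> = of_nat n * of_int (1 + q)"
    using assms(2) by (simp add: algebra_simps)
  finally show ?thesis
    using assms(1) by simp
qed

lemma fact_mult_fact_add_fact_mult_fact:
  assumes "k < n"
  shows "fact k * fact (n - k) + fact (Suc k) * fact (n - Suc k)
           = (of_nat n + 1) * (fact k * fact (n - k - 1) :: 'a :: {comm_semiring_1, semiring_char_0})"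
proof -
  have "fact (n - k) = of_nat (n - k) * (fact (n - k - 1) :: 'a)"
    using assms by (intro fact_reduce) simp
  then have "fact k * fact (n - k) + fact (Suc k) * fact (n - Suc k)
               = (of_nat (n - k) + of_nat (Suc k)) * (fact k * fact (n - k - 1) :: 'a)"
    by (simp only: fact_Suc diff_Suc_eq_diff_pred algebra_simps)
  also have "of_nat (n - k) + of_nat (Suc k) = (of_nat (n - k + Suc k) :: 'a)"
    by (rule of_nat_add[symmetric])
  also have "n - k + Suc k = n + 1"
    using assms by simp
  finally show ?thesis
    by (simp only: of_nat_add of_nat_1)
qed

lemma alt_fact_sum_telescope: "(int n + 1) * alt_fact_sum n = fact n * (1 - (-1) ^ n)"
proof -
  define b :: "nat \<Rightarrow> int" where "b j = (-1) ^ j * fact j * fact (n - j)" for j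
  have "(int n + 1) * alt_fact_sum n = (\<Sum>k<n. b k - b (Suc k))"
    unfolding alt_fact_sum_def sum_distrib_left
  proof (rule sum.cong)
    fix k assume "k \<in> {..<n}"
    then have "k < n"
      by simp
    have "(int n + 1) * ((-1) ^ k * fact k * fact (n - k - 1))
            = (-1) ^ k * ((int n + 1) * (fact k * fact (n - k - 1)))"
      by (simp add: algebra_simps)
    also have "\<dots> = (-1) ^ k * (fact k * fact (n - k) + fact (Suc k) * fact (n - Suc k))"
      by (simp only: fact_mult_fact_add_fact_mult_fact[OF \<open>k < n\<close>])
    also have "\<dots> = b k - b (Suc k)"
      by (simp add: b_def algebra_simps)
    finally show "(int n + 1) * ((-1) ^ k * fact k * fact (n - k - 1)) = b k - b (Suc k)" .
  qed simp
  also have "\<dots> = b 0 - b n"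
    by (rule sum_lessThan_telescope')
  finally show ?thesis
    by (simp add: b_def algebra_simps)
qed

lemma alt_fact_sum_even: "even n \<Longrightarrow> alt_fact_sum n = 0"
  using alt_fact_sum_telescope[of n] by simp

lemma alt_fact_sum_odd:
  assumes "odd n"
  obtains r where "alt_fact_sum n = int n * r" and "[r = 2 * fact (n - 1)] (mod int n)"
proof -
  obtain j where n: "n = 2 * j + 1"
    using assms by (rule oddE)
  define h where "h = Suc j"
  have n_succ: "int n + 1 = 2 * int h"
    unfolding n h_def by simp
  have "h dvd fact (n - 1)"
    unfolding n h_def by (cases "j = 0") (auto intro: dvd_fact)
  then obtain r :: int where r: "fact (n - 1) = int h * r"
    by (metis dvdE of_nat_fact of_nat_mult)
  have "(int n + 1) * alt_fact_sum n = 2 * fact n"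
    using alt_fact_sum_telescope[of n] assms by simp
  also have "\<dots> = int n * r * (2 * int h)"
    using fact_reduce[OF odd_pos[OF assms], where 'a = int] r by (simp add: mult_ac)
  also have "\<dots> = (int n + 1) * (int n * r)"
    by (simp add: n_succ mult_ac)
  finally have "alt_fact_sum n = int n * r"
    by simp
  moreover have "2 * fact (n - 1) = (int n + 1) * r"
    using r by (simp add: n_succ mult.assoc)
  then have "[r = 2 * fact (n - 1)] (mod int n)"
    by (simp add: cong_iff_dvd_diff algebra_simps)
  ultimately show thesis
    using that by blast
qed

lemma mult_dvd_fact_add:
  fixes a b :: nat
  assumes "a \<ge> 1" and "b \<ge> 1"
  shows "a * b dvd fact (a + b)"
proof -
  have "a * b dvd fact a * fact b"
    using assms by (intro mult_dvd_mono dvd_fact) auto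
  also have "\<dots> dvd fact (a + b)"
    by (rule fact_fact_dvd_fact)
  finally show ?thesis .
qed

lemma add_less_mult_nat:
  fixes a b :: nat
  assumes "a > 1" and "b > 1" and "a * b \<noteq> 4"
  shows "a + b < a * b"
proof (cases "a = 2")
  case True
  then show ?thesis
    using assms by auto
next
  case False
  then have "3 * b \<le> a * b" and "a * 2 \<le> a * b"
    using assms by (intro mult_le_mono; simp)+
  then show ?thesis
    using assms by linarith
qed

lemma composite_dvd_fact_pred:
  fixes n :: nat
  assumes "n > 1" and "\<not> prime n" and "n \<noteq> 4"
  shows "n dvd fact (n - 1)"
proof -
  obtain a where "a dvd n" and "a \<noteq> 1" and "a \<noteq> n"
    using assms(1,2) prime_nat_iff by auto
  then obtain b where n: "n = a * b"
    by blast
  with assms(1) \<open>a \<noteq> 1\<close> \<open>a \<noteq> n\<close> have "a > 1" and "b > 1"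
    by (auto simp: nat_neq_iff)
  have "n dvd fact (a + b)"
    using n \<open>a > 1\<close> \<open>b > 1\<close> by (simp add: mult_dvd_fact_add)
  also have "\<dots> dvd fact (n - 1)"
    using add_less_mult_nat[OF \<open>a > 1\<close> \<open>b > 1\<close>] n assms(3) by (intro fact_dvd) simp
  finally show ?thesis .
qed

lemma fact_pred_cong:
  fixes n :: nat
  assumes "n \<ge> 1" and "n \<noteq> 4"
  shows "[fact (n - 1) = (if prime n then -1 else 0 :: int)] (mod int n)"
proof (cases "prime n")
  case True
  then show ?thesis
    using wilson_theorem by simp
next
  case False
  have "int n dvd fact (n - 1)"
  proof (cases "n = 1")
    case False
    with assms \<open>\<not> prime n\<close> have "n dvd fact (n - 1)"
      by (intro composite_dvd_fact_pred) auto
    then show ?thesis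
      by (metis of_nat_dvd_iff of_nat_fact)
  qed simp
  then show ?thesis
    using False by (simp add: cong_0_iff)
qed

lemma neg_one_pow_delta_cong: "[(-1) ^ delta n = (if prime n then -1 else 1 :: int)] (mod int n)"
proof (cases "n = 1")
  case True
  then show ?thesis
    by (simp add: cong_def)
next
  case False
  then show ?thesis
    by (simp add: delta_def)
qed

lemma Z_even:
  assumes "n \<ge> 1" and "even n"
  shows "Z n = 1"
  using Z_eq_of_int[OF assms(1), of 0] alt_fact_sum_even[OF assms(2)] by simp

lemma Z_odd_cong:
  assumes "odd n"
  obtains m where "Z n = of_int m" and "[m = (if prime n then -1 else 1)] (mod int n)"
proof -
  obtain r where r: "alt_fact_sum n = int n * r" and r_cong: "[r = 2 * fact (n - 1)] (mod int n)"
    using alt_fact_sum_odd[OF assms] by blast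
  have "n \<ge> 1" and "n \<noteq> 4"
    using odd_pos[OF assms] assms by auto
  have "[2 * fact (n - 1) = 2 * (if prime n then -1 else 0)] (mod int n)"
    using fact_pred_cong[OF \<open>n \<ge> 1\<close> \<open>n \<noteq> 4\<close>] by (rule cong_mult[OF cong_refl])
  then have "[1 + r = 1 + 2 * (if prime n then -1 else 0)] (mod int n)"
    using r_cong by (intro cong_add cong_refl) (rule cong_trans)
  then have "[1 + r = (if prime n then -1 else 1)] (mod int n)"
    by (simp split: if_splits)
  then show thesis
    using that Z_eq_of_int[OF \<open>n \<ge> 1\<close> r] by blast
qed

theorem mainTheorem8:
  fixes n :: nat
  assumes "n \<ge> 1"
  shows "\<exists>m::int. Z n = of_int m \<and> [m = (-1) ^ delta n] (mod int n)"
proof (cases "even n")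
  case True
  have "[1 = (if prime n then -1 else 1 :: int)] (mod int n)"
    using True prime_odd_nat[of n] prime_ge_2_nat[of n] by (cases "n = 2") (auto simp: cong_def)
  then have "[1 = (-1) ^ delta n] (mod int n)"
    using neg_one_pow_delta_cong cong_sym cong_trans by blast
  then show ?thesis
    using Z_even[OF assms True] by (intro exI[of _ 1]) simp
next
  case False
  then obtain m where "Z n = of_int m" and "[m = (if prime n then -1 else 1)] (mod int n)"
    by (rule Z_odd_cong)
  then show ?thesis
    using neg_one_pow_delta_cong cong_sym cong_trans by blast
qed

end
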